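(* Let $n\ge 4$ and for each $i\in[n]$ let $X_i$ be uniformly distributed on $[0,i]$, with arbitrary joint distribution. Then $$ \mathbb{E}\Big[\max\Big\{|A|: A\subset[n],\ \sum_{i\in A}X_i\le 1\Big\}\Big]\le (2H_n)^{1/2}, $$ where $H_n=\sum_{i=1}^n 1/i$ is the $n$-th harmonic number. *)

theory Defs
  imports "HOL-Probability.Probability" "HOL-Analysis.Harmonic_Numbers"
begin

definition max_packing :: "nat \<Rightarrow> (nat \<Rightarrow> real) \<Rightarrow> nat" where
  "max_packing n x = Max {card A | A. A \<subseteq> {1..n} \<and> (\<Sum>i\<in>A. x i) \<le> 1}"

end

theory Submission
  imports Defs
begin

text \<open>For every \<open>\<lambda> > 0\<close> and every feasible \<open>A\<close>, i.e. \<open>\<Sum>\<^sub>i\<^sub>\<in>\<^sub>A x\<^sub>i \<le> 1\<close>,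
  \<open>|A| = \<Sum>\<^sub>i\<^sub>\<in>\<^sub>A (1 - \<lambda> x\<^sub>i) + \<lambda> \<Sum>\<^sub>i\<^sub>\<in>\<^sub>A x\<^sub>i \<le> \<lambda> + \<Sum>\<^sub>i\<^sub>\<le>\<^sub>n (1 - \<lambda> x\<^sub>i)\<^sup>+\<close>.
  The right-hand side no longer involves a maximum, so its expectation only depends on the
  marginals: for \<open>X\<^sub>i\<close> uniform on \<open>[0,i]\<close> and \<open>\<lambda> \<ge> 1\<close> one has \<open>E (1 - \<lambda> X\<^sub>i)\<^sup>+ = 1/(2\<lambda>i)\<close>, giving
  the bound \<open>\<lambda> + H\<^sub>n/(2\<lambda>)\<close>. Its minimum \<open>\<surd>(2H\<^sub>n)\<close> is attained at \<open>\<lambda> = \<surd>(H\<^sub>n/2)\<close>, which is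
  at least 1 because \<open>H\<^sub>n \<ge> 2\<close> for \<open>n \<ge> 4\<close>.\<close>

lemma (in prob_space) has_bochner_integral_const: "has_bochner_integral M (\<lambda>_. c) (c::real)"
  by (simp add: has_bochner_integral_iff prob_space)

lemma nn_integral_hinge_uniform:
  fixes l a :: real
  assumes l: "l > 0" and a: "1 / l \<le> a"
  shows "(\<integral>\<^sup>+x. ennreal (max 0 (1 - l * x)) \<partial>uniform_measure lborel {0..a}) = ennreal (1 / (2 * l * a))"
proof -
  have a0: "a > 0" using a l by (smt (verit) divide_pos_pos)
  have "(\<integral>\<^sup>+x. ennreal (max 0 (1 - l * x)) * indicator {0..a} x \<partial>lborel)
      = (\<integral>\<^sup>+x. ennreal (1 - l * x) * indicator {0..1/l} x \<partial>lborel)"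
  proof (rule nn_integral_cong)
    fix x :: real
    have "x \<le> 1/l \<longleftrightarrow> l * x \<le> 1" using l by (simp add: field_simps)
    then show "ennreal (max 0 (1 - l * x)) * indicator {0..a} x = ennreal (1 - l * x) * indicator {0..1/l} x"
      using a by (auto simp: indicator_def ennreal_eq_0_iff)
  qed
  also have "\<dots> = ennreal (1 / (2 * l))"
  proof (rule nn_integral_has_integral_lebesgue')
    show "\<And>x. x \<in> {0..1/l} \<Longrightarrow> 0 \<le> 1 - l * x"
      using l by (auto simp: field_simps)
    have "((\<lambda>x. 1 - l * x) has_integral ((1/l - l * (1/l)^2 / 2) - (0 - l * 0^2 / 2))) {0..1/l}"
      by (rule fundamental_theorem_of_calculus)
         (use l in \<open>auto intro!: derivative_eq_intros simp: power2_eq_square\<close>)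
    then show "((\<lambda>x. 1 - l * x) has_integral 1 / (2 * l)) {0..1/l}"
      using l by (simp add: field_simps power2_eq_square)
  qed
  finally show ?thesis
    using l a0 by (simp add: nn_integral_uniform_measure divide_ennreal)
qed

lemma (in prob_space) has_bochner_integral_hinge_uniform:
  fixes X :: "'a \<Rightarrow> real" and a l :: real
  assumes X: "X \<in> borel_measurable M" "distr M lborel X = uniform_measure lborel {0..a}"
    and l: "l > 0" "1 / l \<le> a"
  shows "has_bochner_integral M (\<lambda>\<omega>. max 0 (1 - l * X \<omega>)) (1 / (2 * l * a))"
proof (rule has_bochner_integral_nn_integral)
  have "(\<integral>\<^sup>+\<omega>. ennreal (max 0 (1 - l * X \<omega>)) \<partial>M)
      = (\<integral>\<^sup>+x. ennreal (max 0 (1 - l * x)) \<partial>distr M lborel X)"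
    using X by (subst nn_integral_distr) auto
  also have "\<dots> = ennreal (1 / (2 * l * a))"
    unfolding X(2) by (rule nn_integral_hinge_uniform[OF l])
  finally show "(\<integral>\<^sup>+\<omega>. ennreal (max 0 (1 - l * X \<omega>)) \<partial>M) = ennreal (1 / (2 * l * a))" .
  have "a > 0" using l by (smt (verit) divide_pos_pos)
  then show "0 \<le> 1 / (2 * l * a)" using l by simp
qed (use X in auto)

lemma card_le_hinge_sum:
  fixes x :: "'i \<Rightarrow> real"
  assumes A: "finite A" "sum x A \<le> 1" and l: "l \<ge> 0"
  shows "real (card A) \<le> l + (\<Sum>i\<in>A. max 0 (1 - l * x i))"
proof -
  have "real (card A) = (\<Sum>i\<in>A. 1 - l * x i) + l * sum x A"
    by (simp add: sum_subtractf sum_distrib_left)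
  also have "\<dots> \<le> (\<Sum>i\<in>A. max 0 (1 - l * x i)) + l"
    using A l by (intro add_mono sum_mono) (auto simp: mult_left_le)
  finally show ?thesis by simp
qed

lemma max_packing_le_hinge_sum:
  assumes "l \<ge> 0"
  shows "real (max_packing n x) \<le> l + (\<Sum>i=1..n. max 0 (1 - l * x i))"
proof -
  let ?S = "{card A | A. A \<subseteq> {1..n} \<and> sum x A \<le> 1}"
  have "finite ?S"
    by (rule finite_subset[of _ "card ` Pow {1..n}"]) auto
  moreover have "?S \<noteq> {}"
    using empty_subsetI[of "{1..n}"] by fastforce
  ultimately obtain A where A: "max_packing n x = card A" "A \<subseteq> {1..n}" "sum x A \<le> 1"
    unfolding max_packing_def using Max_in[of ?S] by fastforce
  have "real (card A) \<le> l + (\<Sum>i\<in>A. max 0 (1 - l * x i))"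
    using A assms finite_subset by (intro card_le_hinge_sum) auto
  also have "\<dots> \<le> l + (\<Sum>i=1..n. max 0 (1 - l * x i))"
    using A by (intro add_left_mono sum_mono2) auto
  finally show ?thesis using A by simp
qed

lemma harm_ge_two:
  assumes "n \<ge> 4"
  shows "2 \<le> (harm n :: real)"
proof -
  have "harm 4 = (25 / 12 :: real)" by (simp add: harm_def numeral_eq_Suc)
  with harm_mono[OF assms, where 'a=real] show ?thesis by linarith
qed

lemma (in prob_space) expectation_max_packing_le:
  fixes X :: "nat \<Rightarrow> 'a \<Rightarrow> real" and l :: real
  assumes l: "l \<ge> 1"
    and X: "\<And>i. i \<in> {1..n} \<Longrightarrow> X i \<in> borel_measurable M"
      "\<And>i. i \<in> {1..n} \<Longrightarrow> distr M lborel (X i) = uniform_measure lborel {0..real i}"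
  shows "(\<integral>\<omega>. real (max_packing n (\<lambda>i. X i \<omega>)) \<partial>M) \<le> l + harm n / (2 * l)"
proof -
  let ?g = "\<lambda>\<omega>. l + (\<Sum>i=1..n. max 0 (1 - l * X i \<omega>))"
  have "1 / l \<le> real i" if "i \<in> {1..n}" for i
    using l that by (smt (verit) atLeastAtMost_iff divide_le_eq_1 of_nat_1 of_nat_le_iff)
  then have "has_bochner_integral M ?g (l + (\<Sum>i=1..n. 1 / (2 * l * real i)))"
    using l X by (intro has_bochner_integral_add has_bochner_integral_const
        has_bochner_integral_sum has_bochner_integral_hinge_uniform) auto
  moreover have "(\<Sum>i=1..n. 1 / (2 * l * real i)) = harm n / (2 * l)"
    unfolding harm_def sum_divide_distrib by (rule sum.cong) (auto simp: field_simps)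
  ultimately have g: "integrable M ?g" "integral\<^sup>L M ?g = l + harm n / (2 * l)"
    by (simp_all add: has_bochner_integral_iff)
  show ?thesis
  proof (cases "integrable M (\<lambda>\<omega>. real (max_packing n (\<lambda>i. X i \<omega>)))")
    case True
    then show ?thesis
      using integral_mono[OF True g(1) max_packing_le_hinge_sum] l g(2) by simp
  next
    case False
    then show ?thesis using l by (simp add: not_integrable_integral_eq harm_nonneg)
  qed
qed

theorem mainTheorem5:
  fixes M :: "'a measure" and X :: "nat \<Rightarrow> 'a \<Rightarrow> real" and n :: nat
  assumes "prob_space M"
    and "n \<ge> 4"
    and "\<And>i. i \<in> {1..n} \<Longrightarrow> X i \<in> borel_measurable M"
    and "\<And>i. i \<in> {1..n} \<Longrightarrow> distr M lborel (X i) = uniform_measure lborel {0..real i}"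
  shows "(\<integral>\<omega>. real (max_packing n (\<lambda>i. X i \<omega>)) \<partial>M) \<le> sqrt (2 * harm n)"
proof -
  interpret prob_space M by fact
  define l where "l = sqrt (harm n / 2)"
  have H: "harm n \<ge> (2 :: real)" using assms(2) by (rule harm_ge_two)
  then have "l \<ge> 1" by (simp add: l_def)
  have "l * l = harm n / 2" using H by (simp add: l_def)
  then have "l + harm n / (2 * l) = sqrt (2 * harm n)"
    using \<open>l \<ge> 1\<close> H by (intro real_sqrt_unique[symmetric]) (auto simp: field_simps power2_eq_square)
  with expectation_max_packing_le[where n=n, OF \<open>l \<ge> 1\<close> assms(3,4)] show ?thesis by simp
qed

end
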